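(* Let $S\subset\mathbb Z_{\ge1}$. Then $\langle S\rangle_{\mathcal C^w}$ is the union of $S+(\mathcal S_\Gamma\cup\{0\})$ and the set of all integers of the form $k+\overline\beta_b-\overline\beta_a+s$ with $k\in S$, $s\in\mathcal S_\Gamma\cup\{0\}$, $1\le a<b\le g$, $k\le\overline\beta_a$ and $k\equiv\beta_a\pmod{e_{a-1}}$.
   Context: Let $\Gamma$ be a singular irreducible plane branch with multiplicity $n$, Puiseux characteristic exponents $\beta_1<\dots<\beta_g$, $e_0=n$, $e_j=\gcd(e_{j-1},\beta_j)$, $n_j=e_{j-1}/e_j$, $\overline\beta_1=\beta_1$, $\overline\beta_j=n_{j-1}\overline\beta_{j-1}-\beta_{j-1}+\beta_j$ ($2\le j\le g$), and semigroup $\mathcal S_\Gamma$ generated by $n,\overline\beta_1,\dots,\overline\beta_g$. A subset $S\subset\mathbb Z_{>0}$ is a $\mathcal C^w$-collection if $S+\mathcal S_\Gamma\subset S$ and for every $1\le l<g$ and $\lambda\in S$ with $\lambda\le\overline\beta_l$ and $\lambda\equiv\beta_l\pmod{e_{l-1}}$ one has $\lambda+\overline\beta_{l+1}-\overline\beta_l\in S$. $\langle S\rangle_{\mathcal C^w}$ is the smallest $\mathcal C^w$-collection containing $S$. *)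

theory Defs
  imports Main
begin

text \<open>Data of a plane branch: multiplicity n, genus g, characteristic exponents
  beta 1 < ... < beta g (values of beta outside 1..g are irrelevant).\<close>

fun ee :: "int \<Rightarrow> (nat \<Rightarrow> int) \<Rightarrow> nat \<Rightarrow> int" where
  "ee n \<beta> 0 = n"
| "ee n \<beta> (Suc j) = gcd (ee n \<beta> j) (\<beta> (Suc j))"

text \<open>betabar 0 is set to n by convention (unused); betabar 1 = beta 1,
  betabar (l+1) = n_l * betabar l - beta l + beta (l+1), with n_l = e_(l-1)/e_l.\<close>
fun betabar :: "int \<Rightarrow> (nat \<Rightarrow> int) \<Rightarrow> nat \<Rightarrow> int" where
  "betabar n \<beta> 0 = n"
| "betabar n \<beta> (Suc 0) = \<beta> 1"
| "betabar n \<beta> (Suc (Suc j)) =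
     (ee n \<beta> j div ee n \<beta> (Suc j)) * betabar n \<beta> (Suc j) - \<beta> (Suc j) + \<beta> (Suc (Suc j))"

definition puiseux_char :: "int \<Rightarrow> nat \<Rightarrow> (nat \<Rightarrow> int) \<Rightarrow> bool" where
  "puiseux_char n g \<beta> \<longleftrightarrow> n \<ge> 2 \<and> g \<ge> 1 \<and> n < \<beta> 1
     \<and> (\<forall>j\<in>{1..<g}. \<beta> j < \<beta> (Suc j))
     \<and> (\<forall>j\<in>{1..g}. ee n \<beta> j < ee n \<beta> (j - 1))
     \<and> ee n \<beta> g = 1"

text \<open>The semigroup generated by n, betabar 1, ..., betabar g (contains 0).\<close>
definition semigroup_branch :: "int \<Rightarrow> nat \<Rightarrow> (nat \<Rightarrow> int) \<Rightarrow> int set" where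
  "semigroup_branch n g \<beta> =
     {x. \<exists>c :: nat \<Rightarrow> nat. x = int (c 0) * n + (\<Sum>j=1..g. int (c j) * betabar n \<beta> j)}"

definition Cw_collection :: "int \<Rightarrow> nat \<Rightarrow> (nat \<Rightarrow> int) \<Rightarrow> int set \<Rightarrow> bool" where
  "Cw_collection n g \<beta> T \<longleftrightarrow> T \<subseteq> {0<..}
     \<and> (\<forall>x\<in>T. \<forall>s\<in>semigroup_branch n g \<beta>. x + s \<in> T)
     \<and> (\<forall>l\<in>{1..<g}. \<forall>x\<in>T. x \<le> betabar n \<beta> l \<and> x mod ee n \<beta> (l - 1) = \<beta> l mod ee n \<beta> (l - 1)
          \<longrightarrow> x + betabar n \<beta> (Suc l) - betabar n \<beta> l \<in> T)"

definition Cw_hull :: "int \<Rightarrow> nat \<Rightarrow> (nat \<Rightarrow> int) \<Rightarrow> int set \<Rightarrow> int set" where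
  "Cw_hull n g \<beta> S = \<Inter>{T. Cw_collection n g \<beta> T \<and> S \<subseteq> T}"

end

theory Submission
  imports Defs
begin

text \<open>
  Jumping from level a to level b maps a value congruent to beta a modulo e (a-1) and at most
  betabar a to one congruent to beta b modulo e (b-1) and at most betabar b, so every
  C^w-collection is closed under the composite jumps k \<mapsto> k + betabar b - betabar a; hence the
  right-hand side lies in every C^w-collection containing S.  Conversely it is itself one: an
  element lying above a jump from level a to level b is too large to jump at any level l < b
  (betabar more than doubles from one level to the next), it cannot jump
  at a level l > b either, because beta l would then be divisible by e (l-1) although
  e l < e (l-1); and jumping at level b itself just prolongs the composite jump.  Semigroup
  translates are harmless since semigroup elements below betabar l are multiples of e (l-1).
\<close>

section \<open>Divisibility properties of the characteristic sequences\<close>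

lemma ee_dvd_mono: "i \<le> j \<Longrightarrow> ee n \<beta> j dvd ee n \<beta> i"
  by (induction j rule: dec_induct) (auto intro: dvd_trans[rotated])

lemma ee_dvd_beta: "1 \<le> j \<Longrightarrow> ee n \<beta> j dvd \<beta> j"
  by (cases j) auto

lemma betabar_Suc: "1 \<le> l \<Longrightarrow> betabar n \<beta> (Suc l) =
    (ee n \<beta> (l - 1) div ee n \<beta> l) * betabar n \<beta> l - \<beta> l + \<beta> (Suc l)"
  by (cases l) auto

lemma ee_dvd_betabar: "1 \<le> j \<Longrightarrow> ee n \<beta> j dvd betabar n \<beta> j"
proof (induction j rule: nat_induct_at_least)
  case base
  then show ?case by simp
next
  case (Suc l)
  have "ee n \<beta> (Suc l) dvd ee n \<beta> l"
    by simp
  then have "ee n \<beta> (Suc l) dvd betabar n \<beta> l" "ee n \<beta> (Suc l) dvd \<beta> l"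
    using Suc.IH ee_dvd_beta[OF Suc.hyps] by (auto intro: dvd_trans)
  moreover have "ee n \<beta> (Suc l) dvd \<beta> (Suc l)"
    by (simp add: ee_dvd_beta)
  ultimately show ?case
    unfolding betabar_Suc[OF Suc.hyps] by (intro dvd_add dvd_diff dvd_mult) auto
qed

section \<open>The jump condition\<close>

definition jump_condition :: "int \<Rightarrow> (nat \<Rightarrow> int) \<Rightarrow> nat \<Rightarrow> int \<Rightarrow> bool" where
  "jump_condition n \<beta> l x \<longleftrightarrow>
     x \<le> betabar n \<beta> l \<and> x mod ee n \<beta> (l - 1) = \<beta> l mod ee n \<beta> (l - 1)"

lemma jump_condition_Suc:
  assumes "1 \<le> l" and "jump_condition n \<beta> l x"
  shows "jump_condition n \<beta> (Suc l) (x + betabar n \<beta> (Suc l) - betabar n \<beta> l)"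
proof -
  have "ee n \<beta> l dvd ee n \<beta> (l - 1)"
    by (rule ee_dvd_mono) simp
  moreover have "ee n \<beta> (l - 1) dvd x - \<beta> l"
    using assms(2) by (simp add: jump_condition_def mod_eq_dvd_iff)
  ultimately have "ee n \<beta> l dvd x - \<beta> l"
    by (rule dvd_trans)
  moreover have "ee n \<beta> l dvd betabar n \<beta> l"
    using assms(1) by (rule ee_dvd_betabar)
  moreover have "x + betabar n \<beta> (Suc l) - betabar n \<beta> l - \<beta> (Suc l) =
      (x - \<beta> l) + (ee n \<beta> (l - 1) div ee n \<beta> l - 1) * betabar n \<beta> l"
    unfolding betabar_Suc[OF assms(1)] by (simp add: algebra_simps)
  ultimately have "ee n \<beta> l dvd x + betabar n \<beta> (Suc l) - betabar n \<beta> l - \<beta> (Suc l)"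
    by (metis dvd_add dvd_mult)
  then show ?thesis
    using assms(2) by (simp add: jump_condition_def mod_eq_dvd_iff)
qed

lemma jump_condition_jump:
  assumes "1 \<le> a" "a < b" and "jump_condition n \<beta> a k"
  shows "jump_condition n \<beta> b (k + betabar n \<beta> b - betabar n \<beta> a)"
proof -
  have "Suc a \<le> b"
    using assms(2) by simp
  then show ?thesis
  proof (induction b rule: dec_induct)
    case base
    show ?case
      using jump_condition_Suc[OF assms(1,3)] .
  next
    case (step m)
    then have "jump_condition n \<beta> (Suc m)
        ((k + betabar n \<beta> m - betabar n \<beta> a) + betabar n \<beta> (Suc m) - betabar n \<beta> m)"
      using assms(1) by (intro jump_condition_Suc) auto
    then show ?case
      by (simp add: algebra_simps del: betabar.simps)
  qed
qed

lemma Cw_collection_jump: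
  assumes "Cw_collection n g \<beta> T" "x \<in> T" "1 \<le> l" "l < g" "jump_condition n \<beta> l x"
  shows "x + betabar n \<beta> (Suc l) - betabar n \<beta> l \<in> T"
  using assms unfolding Cw_collection_def jump_condition_def by auto

lemma Cw_collection_jumps:
  assumes T: "Cw_collection n g \<beta> T" and "k \<in> T" "1 \<le> a" "a < b" "b \<le> g"
    and "jump_condition n \<beta> a k"
  shows "k + betabar n \<beta> b - betabar n \<beta> a \<in> T"
proof -
  have "Suc a \<le> b"
    using assms(4) by simp
  then show ?thesis
    using assms(5)
  proof (induction b rule: dec_induct)
    case base
    show ?case
      using Cw_collection_jump[OF T assms(2,3) _ assms(6)] base by simp
  next
    case (step m)
    let ?y = "k + betabar n \<beta> m - betabar n \<beta> a"
    have "?y + betabar n \<beta> (Suc m) - betabar n \<beta> m \<in> T"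
      using step assms(3,6) by (intro Cw_collection_jump[OF T] jump_condition_jump) auto
    then show ?case
      by (simp add: algebra_simps del: betabar.simps)
  qed
qed

lemma zero_in_semigroup_branch: "0 \<in> semigroup_branch n g \<beta>"
  unfolding semigroup_branch_def by (auto intro!: exI[of _ "\<lambda>_. 0"])

lemma semigroup_branch_add:
  assumes "s \<in> semigroup_branch n g \<beta>" "t \<in> semigroup_branch n g \<beta>"
  shows "s + t \<in> semigroup_branch n g \<beta>"
proof -
  obtain c d where
    c: "s = int (c 0) * n + (\<Sum>j=1..g. int (c j) * betabar n \<beta> j)" and
    d: "t = int (d 0) * n + (\<Sum>j=1..g. int (d j) * betabar n \<beta> j)"
    using assms by (auto simp: semigroup_branch_def)
  have "s + t = int (c 0 + d 0) * n + (\<Sum>j=1..g. int (c j + d j) * betabar n \<beta> j)"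
    unfolding c d by (simp add: sum.distrib algebra_simps)
  then have "\<exists>e. s + t = int (e 0) * n + (\<Sum>j=1..g. int (e j) * betabar n \<beta> j)"
    by (intro exI[of _ "\<lambda>j. c j + d j"])
  then show ?thesis
    unfolding semigroup_branch_def by simp
qed

section \<open>The C^w-hull\<close>

definition jump_set :: "int \<Rightarrow> nat \<Rightarrow> (nat \<Rightarrow> int) \<Rightarrow> int set \<Rightarrow> int set" where
  "jump_set n g \<beta> S = {k + betabar n \<beta> b - betabar n \<beta> a | k a b.
     k \<in> S \<and> 1 \<le> a \<and> a < b \<and> b \<le> g \<and> jump_condition n \<beta> a k}"

definition semigroup_translates :: "int \<Rightarrow> nat \<Rightarrow> (nat \<Rightarrow> int) \<Rightarrow> int set \<Rightarrow> int set" where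
  "semigroup_translates n g \<beta> X = {x + s | x s. x \<in> X \<and> s \<in> semigroup_branch n g \<beta>}"

lemma Cw_hull_eqI:
  assumes "Cw_collection n g \<beta> T" "S \<subseteq> T"
    and "\<And>T'. Cw_collection n g \<beta> T' \<Longrightarrow> S \<subseteq> T' \<Longrightarrow> T \<subseteq> T'"
  shows "Cw_hull n g \<beta> S = T"
  using assms unfolding Cw_hull_def by blast

lemma subset_semigroup_translates: "X \<subseteq> semigroup_translates n g \<beta> X"
  unfolding semigroup_translates_def using zero_in_semigroup_branch by force

lemma semigroup_translates_subset_Cw_collection:
  assumes T: "Cw_collection n g \<beta> T" and "S \<subseteq> T"
  shows "semigroup_translates n g \<beta> (S \<union> jump_set n g \<beta> S) \<subseteq> T"
proof -
  have "jump_set n g \<beta> S \<subseteq> T"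
    using Cw_collection_jumps[OF T] assms(2) unfolding jump_set_def by blast
  with T assms(2) show ?thesis
    unfolding semigroup_translates_def Cw_collection_def by blast
qed

section \<open>Consequences of the Puiseux characteristic\<close>

locale plane_branch =
  fixes n :: int and g :: nat and \<beta> :: "nat \<Rightarrow> int"
  assumes puiseux_char: "puiseux_char n g \<beta>"
begin

lemma n_ge_2: "2 \<le> n"
  using puiseux_char by (simp add: puiseux_char_def)

lemma ee_Suc_less: "l < g \<Longrightarrow> ee n \<beta> (Suc l) < ee n \<beta> l"
proof -
  assume "l < g"
  then have "Suc l \<in> {1..g}"
    by simp
  then have "ee n \<beta> (Suc l) < ee n \<beta> (Suc l - 1)"
    using puiseux_char unfolding puiseux_char_def by blast
  then show ?thesis
    by simp
qed

lemma ee_pos: "l \<le> g \<Longrightarrow> 1 \<le> ee n \<beta> l"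
proof (induction l rule: inc_induct)
  case base
  show ?case
    using puiseux_char by (simp add: puiseux_char_def)
next
  case (step l)
  then show ?case
    using ee_Suc_less[of l] by simp
qed

lemma ee_quotient_ge_2:
  assumes "1 \<le> l" "l \<le> g"
  shows "2 \<le> ee n \<beta> (l - 1) div ee n \<beta> l"
proof -
  obtain q where q: "ee n \<beta> (l - 1) = ee n \<beta> l * q"
    using ee_dvd_mono[of "l - 1" l n \<beta>] by (auto elim: dvdE)
  have less: "ee n \<beta> l < ee n \<beta> (l - 1)"
    using ee_Suc_less[of "l - 1"] assms by simp
  have pos: "1 \<le> ee n \<beta> l"
    using ee_pos assms(2) .
  have "1 < q"
  proof (rule ccontr)
    assume "\<not> 1 < q"
    then have "ee n \<beta> l * q \<le> ee n \<beta> l * 1"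
      using pos by (intro mult_left_mono) auto
    then show False
      using less q by simp
  qed
  then show ?thesis
    using q pos by simp
qed

lemma betabar_Suc_gt_double:
  assumes "1 \<le> l" "l < g" "0 < betabar n \<beta> l"
  shows "2 * betabar n \<beta> l < betabar n \<beta> (Suc l)"
proof -
  have "2 * betabar n \<beta> l \<le> (ee n \<beta> (l - 1) div ee n \<beta> l) * betabar n \<beta> l"
    using ee_quotient_ge_2[of l] assms by (intro mult_right_mono) auto
  moreover have "\<beta> l < \<beta> (Suc l)"
    using puiseux_char assms(1,2) by (simp add: puiseux_char_def)
  ultimately show ?thesis
    unfolding betabar_Suc[OF assms(1)] by simp
qed

lemma betabar_pos: "1 \<le> l \<Longrightarrow> l \<le> g \<Longrightarrow> 0 < betabar n \<beta> l"
proof (induction l rule: nat_induct_at_least)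
  case base
  then show ?case
    using puiseux_char by (simp add: puiseux_char_def)
next
  case (Suc l)
  then show ?case
    using betabar_Suc_gt_double[of l] by simp
qed

lemma betabar_mono:
  assumes "1 \<le> a" "a \<le> b" "b \<le> g"
  shows "betabar n \<beta> a \<le> betabar n \<beta> b"
  using assms(2,3)
proof (induction b rule: dec_induct)
  case (step m)
  then show ?case
    using betabar_Suc_gt_double[of m] betabar_pos[of m] assms(1) by simp
qed simp

lemma betabar_less_jump:
  assumes "1 \<le> a" "a < b" "b \<le> g" "1 \<le> l" "l < b"
  shows "betabar n \<beta> l < betabar n \<beta> b - betabar n \<beta> a"
proof -
  define m where "m = max a l"
  have "2 * betabar n \<beta> m < betabar n \<beta> (Suc m)"
    using assms m_def by (intro betabar_Suc_gt_double betabar_pos) auto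
  moreover have "betabar n \<beta> (Suc m) \<le> betabar n \<beta> b"
    "betabar n \<beta> a \<le> betabar n \<beta> m" "betabar n \<beta> l \<le> betabar n \<beta> m"
    using assms m_def by (auto intro: betabar_mono)
  ultimately show ?thesis
    by simp
qed

lemma jump_pos: "1 \<le> a \<Longrightarrow> a < b \<Longrightarrow> b \<le> g \<Longrightarrow> 0 < betabar n \<beta> b - betabar n \<beta> a"
  using betabar_less_jump[of a b a] betabar_pos[of a] by simp

lemma semigroup_branch_nonneg:
  assumes "s \<in> semigroup_branch n g \<beta>"
  shows "0 \<le> s"
proof -
  obtain c where c: "s = int (c 0) * n + (\<Sum>j=1..g. int (c j) * betabar n \<beta> j)"
    using assms by (auto simp: semigroup_branch_def)
  have "0 \<le> (\<Sum>j=1..g. int (c j) * betabar n \<beta> j)"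
    using betabar_pos by (intro sum_nonneg) (simp add: less_imp_le)
  then show ?thesis
    using c n_ge_2 by simp
qed

text \<open>Only the generators n, betabar 1, ..., betabar (l-1), all divisible by e (l-1), can
  contribute to a semigroup element below betabar l.\<close>

lemma semigroup_branch_dvd_below:
  assumes "s \<in> semigroup_branch n g \<beta>" "1 \<le> l" "l \<le> g" "s < betabar n \<beta> l"
  shows "ee n \<beta> (l - 1) dvd s"
proof -
  obtain c where c: "s = int (c 0) * n + (\<Sum>j=1..g. int (c j) * betabar n \<beta> j)"
    using assms(1) by (auto simp: semigroup_branch_def)
  have term_le: "int (c j) * betabar n \<beta> j \<le> s" if "j \<in> {1..g}" for j
  proof -
    have "int (c j) * betabar n \<beta> j \<le> (\<Sum>j=1..g. int (c j) * betabar n \<beta> j)"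
      using that betabar_pos by (intro member_le_sum) (auto simp: less_imp_le)
    moreover have "0 \<le> int (c 0) * n"
      using n_ge_2 by simp
    ultimately show ?thesis
      using c by linarith
  qed
  have "ee n \<beta> (l - 1) dvd int (c j) * betabar n \<beta> j" if j: "j \<in> {1..g}" for j
  proof (cases "j < l")
    case True
    then have "ee n \<beta> (l - 1) dvd ee n \<beta> j"
      by (intro ee_dvd_mono) simp
    also have "ee n \<beta> j dvd betabar n \<beta> j"
      using j by (intro ee_dvd_betabar) simp
    finally show ?thesis
      by simp
  next
    case False
    have "c j = 0"
    proof (rule ccontr)
      assume "c j \<noteq> 0"
      then have "betabar n \<beta> j \<le> int (c j) * betabar n \<beta> j"
        using betabar_pos[of j] j by (simp add: mult_le_cancel_right1)
      moreover have "betabar n \<beta> l \<le> betabar n \<beta> j"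
        using False j assms(2) by (intro betabar_mono) auto
      ultimately show False
        using term_le[OF j] assms(4) by simp
    qed
    then show ?thesis
      by simp
  qed
  then have "ee n \<beta> (l - 1) dvd (\<Sum>j=1..g. int (c j) * betabar n \<beta> j)"
    by (intro dvd_sum) auto
  moreover have "ee n \<beta> (l - 1) dvd n"
    using ee_dvd_mono[of 0 "l - 1" n \<beta>] by simp
  ultimately show ?thesis
    using c by simp
qed

lemma jump_condition_semigroup_cancel:
  assumes "jump_condition n \<beta> l (y + s)" "0 < y" "s \<in> semigroup_branch n g \<beta>" "1 \<le> l" "l \<le> g"
  shows "jump_condition n \<beta> l y"
proof -
  have "ee n \<beta> (l - 1) dvd s"
    using assms by (intro semigroup_branch_dvd_below) (auto simp: jump_condition_def)
  moreover have "ee n \<beta> (l - 1) dvd (y + s) - \<beta> l"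
    using assms(1) by (simp add: jump_condition_def mod_eq_dvd_iff)
  ultimately have "ee n \<beta> (l - 1) dvd ((y + s) - \<beta> l) - s"
    by (rule dvd_diff[rotated])
  then have "ee n \<beta> (l - 1) dvd y - \<beta> l"
    by (simp add: algebra_simps)
  then show ?thesis
    using assms(1) semigroup_branch_nonneg[OF assms(3)]
    by (simp add: jump_condition_def mod_eq_dvd_iff)
qed

text \<open>If e (l-1) divided both y - beta l and y - beta b, it would divide beta l, and then
  e l = gcd (e (l-1)) (beta l) = e (l-1).\<close>

lemma beta_congruences_exclusive:
  assumes "1 \<le> b" "b < l" "l \<le> g"
    and "y mod ee n \<beta> (b - 1) = \<beta> b mod ee n \<beta> (b - 1)"
  shows "y mod ee n \<beta> (l - 1) \<noteq> \<beta> l mod ee n \<beta> (l - 1)"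
proof
  assume "y mod ee n \<beta> (l - 1) = \<beta> l mod ee n \<beta> (l - 1)"
  then have dvd_l: "ee n \<beta> (l - 1) dvd y - \<beta> l"
    by (simp add: mod_eq_dvd_iff)
  have dvd_b: "ee n \<beta> (l - 1) dvd y - \<beta> b"
  proof -
    have "ee n \<beta> (l - 1) dvd ee n \<beta> (b - 1)"
      using assms(2) by (intro ee_dvd_mono) simp
    also have "ee n \<beta> (b - 1) dvd y - \<beta> b"
      using assms(4) by (simp add: mod_eq_dvd_iff)
    finally show ?thesis .
  qed
  have dvd_beta_b: "ee n \<beta> (l - 1) dvd \<beta> b"
  proof -
    have "ee n \<beta> (l - 1) dvd ee n \<beta> b"
      using assms(2) by (intro ee_dvd_mono) simp
    also have "ee n \<beta> b dvd \<beta> b"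
      using assms(1) by (rule ee_dvd_beta)
    finally show ?thesis .
  qed
  have "ee n \<beta> (l - 1) dvd (y - \<beta> b) - (y - \<beta> l) + \<beta> b"
    using dvd_add[OF dvd_diff[OF dvd_b dvd_l] dvd_beta_b] .
  then have "ee n \<beta> (l - 1) dvd \<beta> l"
    by simp
  moreover have "ee n \<beta> l = gcd (ee n \<beta> (l - 1)) (\<beta> l)"
    using assms(2) by (cases l) auto
  moreover have "1 \<le> ee n \<beta> (l - 1)"
    using assms(3) by (intro ee_pos) simp
  ultimately have "ee n \<beta> l = ee n \<beta> (l - 1)"
    by (simp add: gcd_proj1_if_dvd)
  moreover have "ee n \<beta> l < ee n \<beta> (l - 1)"
    using ee_Suc_less[of "l - 1"] assms(2,3) by (simp add: Suc_pred')
  ultimately show False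
    by simp
qed

lemma jump_set_pos: "S \<subseteq> {0<..} \<Longrightarrow> jump_set n g \<beta> S \<subseteq> {0<..}"
  unfolding jump_set_def using jump_pos by fastforce

lemma semigroup_translates_pos:
  "X \<subseteq> {0<..} \<Longrightarrow> semigroup_translates n g \<beta> X \<subseteq> {0<..}"
  unfolding semigroup_translates_def using semigroup_branch_nonneg by fastforce

lemma semigroup_translates_jump:
  assumes S: "S \<subseteq> {0<..}" and y: "y \<in> S \<union> jump_set n g \<beta> S"
    and s: "s \<in> semigroup_branch n g \<beta>" and l: "1 \<le> l" "l < g"
    and jump: "jump_condition n \<beta> l (y + s)"
  shows "y + s + betabar n \<beta> (Suc l) - betabar n \<beta> l
    \<in> semigroup_translates n g \<beta> (S \<union> jump_set n g \<beta> S)"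
proof -
  have "y + betabar n \<beta> (Suc l) - betabar n \<beta> l \<in> jump_set n g \<beta> S"
  proof -
    have y_jump: "jump_condition n \<beta> l y"
      using jump_condition_semigroup_cancel[OF jump _ s] y S jump_set_pos[OF S] l by auto
    from y consider (base) "y \<in> S"
      | (jump) k a b where "y = k + betabar n \<beta> b - betabar n \<beta> a" "k \<in> S"
          "1 \<le> a" "a < b" "b \<le> g" "jump_condition n \<beta> a k"
      unfolding jump_set_def by blast
    then show ?thesis
    proof cases
      case base
      then show ?thesis
        using y_jump l unfolding jump_set_def by force
    next
      case jump
      consider "l < b" | "l = b" | "b < l"
        by linarith
      then show ?thesis
      proof cases
        case 1
        then show ?thesis
          using betabar_less_jump[of a b l] jump y_jump S l by (auto simp: jump_condition_def)
      next
        case 2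
        then have "y + betabar n \<beta> (Suc l) - betabar n \<beta> l
            = k + betabar n \<beta> (Suc b) - betabar n \<beta> a" "Suc b \<le> g"
          using jump(1) l by simp_all
        then show ?thesis
          using jump(2-4,6) unfolding jump_set_def by force
      next
        case 3
        then show ?thesis
          using beta_congruences_exclusive[of b l y] jump_condition_jump[OF jump(3,4,6)] jump
            y_jump l
          by (simp add: jump_condition_def)
      qed
    qed
  qed
  then show ?thesis
    using s unfolding semigroup_translates_def by force
qed

lemma Cw_collection_semigroup_translates:
  assumes S: "S \<subseteq> {0<..}"
  shows "Cw_collection n g \<beta> (semigroup_translates n g \<beta> (S \<union> jump_set n g \<beta> S))"
  unfolding Cw_collection_def
proof (intro conjI ballI impI)
  show "semigroup_translates n g \<beta> (S \<union> jump_set n g \<beta> S) \<subseteq> {0<..}"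
    using S jump_set_pos[OF S] by (intro semigroup_translates_pos) auto
next
  fix x t
  assume "x \<in> semigroup_translates n g \<beta> (S \<union> jump_set n g \<beta> S)" "t \<in> semigroup_branch n g \<beta>"
  then obtain y s where "x = y + s" "y \<in> S \<union> jump_set n g \<beta> S" "s \<in> semigroup_branch n g \<beta>"
    "t \<in> semigroup_branch n g \<beta>"
    unfolding semigroup_translates_def by blast
  moreover have "x + t = y + (s + t)"
    using \<open>x = y + s\<close> by simp
  ultimately show "x + t \<in> semigroup_translates n g \<beta> (S \<union> jump_set n g \<beta> S)"
    unfolding semigroup_translates_def by (blast intro: semigroup_branch_add)
next
  fix l x
  assume "l \<in> {1..<g}" "x \<in> semigroup_translates n g \<beta> (S \<union> jump_set n g \<beta> S)"
    "x \<le> betabar n \<beta> l \<and> x mod ee n \<beta> (l - 1) = \<beta> l mod ee n \<beta> (l - 1)"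
  then show "x + betabar n \<beta> (Suc l) - betabar n \<beta> l
      \<in> semigroup_translates n g \<beta> (S \<union> jump_set n g \<beta> S)"
    using semigroup_translates_jump[OF S]
    unfolding semigroup_translates_def[of n g \<beta> "S \<union> jump_set n g \<beta> S"] jump_condition_def
    by auto
qed

lemma Cw_hull_eq_semigroup_translates:
  assumes "S \<subseteq> {0<..}"
  shows "Cw_hull n g \<beta> S = semigroup_translates n g \<beta> (S \<union> jump_set n g \<beta> S)"
proof (rule Cw_hull_eqI)
  show "S \<subseteq> semigroup_translates n g \<beta> (S \<union> jump_set n g \<beta> S)"
    using subset_semigroup_translates by blast
qed (use Cw_collection_semigroup_translates[OF assms] semigroup_translates_subset_Cw_collection
  in auto)

end

theorem mainTheorem7:
  fixes n :: int and g :: nat and \<beta> :: "nat \<Rightarrow> int" and S :: "int set"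
  assumes "puiseux_char n g \<beta>"
    and "S \<subseteq> {0<..}"
  shows "Cw_hull n g \<beta> S =
    {k + s | k s. k \<in> S \<and> s \<in> semigroup_branch n g \<beta> \<union> {0}}
    \<union> {k + betabar n \<beta> b - betabar n \<beta> a + s | k s a b.
         k \<in> S \<and> s \<in> semigroup_branch n g \<beta> \<union> {0} \<and> 1 \<le> a \<and> a < b \<and> b \<le> g
         \<and> k \<le> betabar n \<beta> a \<and> k mod ee n \<beta> (a - 1) = \<beta> a mod ee n \<beta> (a - 1)}"
proof -
  interpret plane_branch n g \<beta>
    by unfold_locales (rule assms(1))
  have "semigroup_branch n g \<beta> \<union> {0} = semigroup_branch n g \<beta>"
    using zero_in_semigroup_branch by blast
  then show ?thesis
    unfolding Cw_hull_eq_semigroup_translates[OF assms(2)] semigroup_translates_def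
      jump_set_def jump_condition_def
    by blast
qed

end
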